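(* Let $\mathscr T=(V,\mathcal E)$ be the directed Cartesian product of locally finite rooted directed trees $\mathscr T_1,\dots,\mathscr T_d$ and let $\{c_t\}_{t\in\mathbb N}$ be a bounded sequence of positive real numbers. Consider the multishift $S_{\boldsymbol\lambda_{\mathfrak C}}=(S_1,\dots,S_d)$ on $\mathscr T$ with weights $$\lambda^{(i)}_w=\sqrt{\frac{c_{|\alpha_v|}}{\mathrm{card}(\mathsf{Chi}_i(v))}}\sqrt{\frac{\alpha_{v_i}+1}{|\alpha_v|+d}}\qquad(w\in\mathsf{Chi}_i(v),\ v\in V,\ i=1,\dots,d).$$ Then $S_{\boldsymbol\lambda_{\mathfrak C}}$ is a (bounded, commuting) spherically balanced multishift. If $c_t=1$ for all $t\in\mathbb N$, then $S_{\boldsymbol\lambda_{\mathfrak C}}$ is a joint isometry.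
   Context: Directed trees: no loops or circuits, connected ignoring orientation, unique parent for vertices with incoming edges; rooted: unique parentless vertex $\mathsf{root}$; $\mathsf{Chi}(u)=\{v:(u,v)\in\mathcal E\}$; locally finite: all $\mathsf{Chi}(u)$ finite; all leafless. Depth of $u$: $n$ with $u\in\mathsf{Chi}^n(\mathsf{root})$. Directed Cartesian product of rooted trees $\mathscr T_j=(V_j,\mathcal E_j)$: $V=V_1\times\dots\times V_d$ (countably infinite), $(v,w)\in\mathcal E$ iff for some $k$, $(v_k,w_k)\in\mathcal E_k$ and $w_j=v_j$ ($j\ne k$). $\mathsf{Chi}_j(v)=\{w:w_j\in\mathsf{Chi}(v_j),w_k=v_k\ (k\ne j)\}$. Depth $\alpha_v=(\alpha_{v_1},\dots,\alpha_{v_d})$ with $\alpha_{v_j}$ the depth of $v_j$ in $\mathscr T_j$; generation $\mathcal G_t=\{v:|\alpha_v|=t\}$. The multishift acts by $S_je_v=\sum_{w\in\mathsf{Chi}_j(v)}\lambda^{(j)}_we_w$ on $l^2(V)$. Spherically balanced: commuting and $\sum_j\|S_je_v\|^2$ constant on each $\mathcal G_t$. Joint isometry: $\sum_jS_j^*S_j=I$. *)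

theory Defs
  imports "HOL-Analysis.Analysis"
begin

definition rooted_dtree :: "'a set \<Rightarrow> ('a \<times> 'a) set \<Rightarrow> 'a \<Rightarrow> bool" where
  "rooted_dtree V E r \<longleftrightarrow>
     E \<subseteq> V \<times> V \<and>
     acyclic E \<and>
     (\<forall>u\<in>V. \<forall>v\<in>V. (u, v) \<in> (E \<union> E\<inverse>)\<^sup>*) \<and>
     (\<forall>u1 u2 v. (u1, v) \<in> E \<and> (u2, v) \<in> E \<longrightarrow> u1 = u2) \<and>
     r \<in> V \<and>
     (\<forall>v\<in>V. (\<nexists>u. (u, v) \<in> E) \<longleftrightarrow> v = r)"

definition chi :: "('a \<times> 'a) set \<Rightarrow> 'a \<Rightarrow> 'a set" where
  "chi E u = {v. (u, v) \<in> E}"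

definition locally_finite_tree :: "'a set \<Rightarrow> ('a \<times> 'a) set \<Rightarrow> bool" where
  "locally_finite_tree V E \<longleftrightarrow> (\<forall>u\<in>V. finite (chi E u))"

definition leafless :: "'a set \<Rightarrow> ('a \<times> 'a) set \<Rightarrow> bool" where
  "leafless V E \<longleftrightarrow> (\<forall>u\<in>V. chi E u \<noteq> {})"

definition depth :: "('a \<times> 'a) set \<Rightarrow> 'a \<Rightarrow> 'a \<Rightarrow> nat" where
  "depth E r v = (THE n. (r, v) \<in> E ^^ n)"

definition prodV :: "nat \<Rightarrow> (nat \<Rightarrow> 'a set) \<Rightarrow> (nat \<Rightarrow> 'a) set" where
  "prodV d Vs = PiE {..<d} Vs"

definition chi_prod :: "nat \<Rightarrow> (nat \<Rightarrow> 'a set) \<Rightarrow> (nat \<Rightarrow> ('a \<times> 'a) set) \<Rightarrow>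
    nat \<Rightarrow> (nat \<Rightarrow> 'a) \<Rightarrow> (nat \<Rightarrow> 'a) set" where
  "chi_prod d Vs Es i v =
     {w \<in> prodV d Vs. (v i, w i) \<in> Es i \<and> (\<forall>k. k \<noteq> i \<longrightarrow> w k = v k)}"

definition abs_depth :: "nat \<Rightarrow> (nat \<Rightarrow> ('a \<times> 'a) set) \<Rightarrow> (nat \<Rightarrow> 'a) \<Rightarrow> (nat \<Rightarrow> 'a) \<Rightarrow> nat" where
  "abs_depth d Es rs v = (\<Sum>j<d. depth (Es j) (rs j) (v j))"

definition in_l2 :: "'v set \<Rightarrow> ('v \<Rightarrow> complex) \<Rightarrow> bool" where
  "in_l2 V f \<longleftrightarrow> (\<forall>v. v \<notin> V \<longrightarrow> f v = 0) \<and> (\<lambda>v. (norm (f v))\<^sup>2) summable_on V"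

definition l2norm :: "'v set \<Rightarrow> ('v \<Rightarrow> complex) \<Rightarrow> real" where
  "l2norm V f = sqrt (\<Sum>\<^sub>\<infinity>v\<in>V. (norm (f v))\<^sup>2)"

definition l2inner :: "'v set \<Rightarrow> ('v \<Rightarrow> complex) \<Rightarrow> ('v \<Rightarrow> complex) \<Rightarrow> complex" where
  "l2inner V f g = (\<Sum>\<^sub>\<infinity>v\<in>V. f v * cnj (g v))"

definition ebasis :: "'v \<Rightarrow> 'v \<Rightarrow> complex" where
  "ebasis v = (\<lambda>w. if w = v then 1 else 0)"

text \<open>Weighted multishift: (S_i f)(w) = lambda^(i)_w f(parent_i(w)) if w has an i-parent,
  and 0 otherwise (the set of i-parents of w has at most one element).\<close>
definition mshift :: "'v set \<Rightarrow> (nat \<Rightarrow> 'v \<Rightarrow> 'v set) \<Rightarrow> (nat \<Rightarrow> 'v \<Rightarrow> real) \<Rightarrow>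
    nat \<Rightarrow> ('v \<Rightarrow> complex) \<Rightarrow> 'v \<Rightarrow> complex" where
  "mshift V Chi lam i f w = (\<Sum>v\<in>{v\<in>V. w \<in> Chi i v}. complex_of_real (lam i w) * f v)"

definition bounded_op :: "'v set \<Rightarrow> (('v \<Rightarrow> complex) \<Rightarrow> ('v \<Rightarrow> complex)) \<Rightarrow> bool" where
  "bounded_op V T \<longleftrightarrow>
     (\<exists>C. \<forall>f. in_l2 V f \<longrightarrow> in_l2 V (T f) \<and> l2norm V (T f) \<le> C * l2norm V f)"

definition commuting :: "nat \<Rightarrow> 'v set \<Rightarrow> (nat \<Rightarrow> ('v \<Rightarrow> complex) \<Rightarrow> ('v \<Rightarrow> complex)) \<Rightarrow> bool" where
  "commuting d V S \<longleftrightarrow> (\<forall>i<d. \<forall>j<d. \<forall>f. in_l2 V f \<longrightarrow> S i (S j f) = S j (S i f))"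

definition spherically_balanced :: "nat \<Rightarrow> 'v set \<Rightarrow> ('v \<Rightarrow> nat) \<Rightarrow>
    (nat \<Rightarrow> ('v \<Rightarrow> complex) \<Rightarrow> ('v \<Rightarrow> complex)) \<Rightarrow> bool" where
  "spherically_balanced d V gen S \<longleftrightarrow>
     commuting d V S \<and>
     (\<forall>t. \<exists>K. \<forall>v\<in>V. gen v = t \<longrightarrow> (\<Sum>j<d. (l2norm V (S j (ebasis v)))\<^sup>2) = K)"

text \<open>Joint isometry: sum_j S_j^* S_j = I, i.e. sum_j <S_j f, S_j g> = <f, g> for all f, g in l^2(V).\<close>
definition joint_isometry :: "nat \<Rightarrow> 'v set \<Rightarrow> (nat \<Rightarrow> ('v \<Rightarrow> complex) \<Rightarrow> ('v \<Rightarrow> complex)) \<Rightarrow> bool" where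
  "joint_isometry d V S \<longleftrightarrow>
     (\<forall>f g. in_l2 V f \<and> in_l2 V g \<longrightarrow> (\<Sum>j<d. l2inner V (S j f) (S j g)) = l2inner V f g)"

text \<open>The i-parent of w in the product (only used when w has one).\<close>
definition parent_prod :: "nat \<Rightarrow> (nat \<Rightarrow> 'a set) \<Rightarrow> (nat \<Rightarrow> ('a \<times> 'a) set) \<Rightarrow>
    nat \<Rightarrow> (nat \<Rightarrow> 'a) \<Rightarrow> (nat \<Rightarrow> 'a)" where
  "parent_prod d Vs Es i w = (THE v. v \<in> prodV d Vs \<and> w \<in> chi_prod d Vs Es i v)"

definition lamC :: "nat \<Rightarrow> (nat \<Rightarrow> 'a set) \<Rightarrow> (nat \<Rightarrow> ('a \<times> 'a) set) \<Rightarrow> (nat \<Rightarrow> 'a) \<Rightarrow>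
    (nat \<Rightarrow> real) \<Rightarrow> nat \<Rightarrow> (nat \<Rightarrow> 'a) \<Rightarrow> real" where
  "lamC d Vs Es rs c i w =
     (let v = parent_prod d Vs Es i w;
          t = abs_depth d Es rs v
      in sqrt (c t / real (card (chi_prod d Vs Es i v)))
         * sqrt ((real (depth (Es i) (rs i) (v i)) + 1) / (real t + real d)))"

end

theory Submission
  imports Defs
begin

text \<open>
  Since every vertex has at most one i-parent, the i-children of distinct vertices are disjoint and
  \<open><S_i f, S_i g> = \<Sum>_v W_i(v) f(v) cnj (g(v))\<close>, where \<open>W_i(v)\<close> is the sum of the squared weights
  on the i-children of v. For the weights \<open>\<lambda>_C\<close> the number of i-children cancels, leaving
  \<open>W_i(v) = c_t (\<alpha>_(v_i) + 1) / (t + d)\<close> with \<open>t = |\<alpha>_v|\<close>, and summing over i gives \<open>c_t\<close>.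
  Hence \<open>\<parallel>S_i\<parallel>^2 \<le> sup c\<close>, \<open>\<Sum>_j \<parallel>S_j e_v\<parallel>^2 = c_t\<close> depends only on the generation of v,
  and \<open>\<Sum>_j S_j^* S_j = I\<close> when \<open>c = 1\<close>. For commutativity, a vertex reached from x by a j-step
  followed by an i-step is also reached by an i-step followed by a j-step, and the products of the
  weights along the two routes agree, because a step in one coordinate changes neither the depth
  nor the number of children in the other.
\<close>

section \<open>Unconditional sums\<close>

lemma has_sum_sum:
  fixes f :: "'i \<Rightarrow> 'a \<Rightarrow> 'b::topological_comm_monoid_add"
  assumes "finite I" and "\<And>j. j \<in> I \<Longrightarrow> (f j has_sum s j) A"
  shows "((\<lambda>x. \<Sum>j\<in>I. f j x) has_sum (\<Sum>j\<in>I. s j)) A"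
  using assms by (induction I rule: finite_induct) (simp_all add: has_sum_add)

lemma has_sum_single_support:
  fixes g :: "'a \<Rightarrow> 'b::{comm_monoid_add,topological_space}"
  assumes "v \<in> A" and "\<And>u. u \<in> A \<Longrightarrow> u \<noteq> v \<Longrightarrow> g u = 0"
  shows "(g has_sum g v) A"
proof -
  have "(g has_sum g v) {v}"
    using has_sum_finite[of "{v}" g] by simp
  also have "?this \<longleftrightarrow> (g has_sum g v) A"
    by (rule has_sum_cong_neutral) (use assms in auto)
  finally show ?thesis .
qed

lemma has_sum_Union_finite_blocks:
  fixes h :: "'b \<Rightarrow> 'c::banach"
  assumes fin: "\<And>v. v \<in> V \<Longrightarrow> finite (B v)" and disj: "disjoint_family_on B V"
    and abs: "(\<lambda>v. \<Sum>w\<in>B v. norm (h w)) summable_on V"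
  shows "(h has_sum (\<Sum>\<^sub>\<infinity>v\<in>V. \<Sum>w\<in>B v. h w)) (\<Union>v\<in>V. B v)"
proof -
  have "(\<lambda>w. norm (h w)) summable_on (\<Union>v\<in>V. B v)"
    by (rule summable_on_UnionI[OF _ abs _ disj]) (use fin in auto)
  then have "h summable_on (\<Union>v\<in>V. B v)"
    by (rule abs_summable_summable)
  then obtain s where s: "(h has_sum s) (\<Union>v\<in>V. B v)"
    by (auto simp: summable_on_def)
  have inj: "inj_on snd (Sigma V B)"
    using disj by (force simp: disjoint_family_on_def inj_on_def)
  have "snd ` Sigma V B = (\<Union>v\<in>V. B v)"
    by force
  then have "((h \<circ> snd) has_sum s) (Sigma V B)"
    using s has_sum_reindex[OF inj, of h s] by simp
  then have "((\<lambda>v. \<Sum>w\<in>B v. h w) has_sum s) V"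
    by (rule has_sum_SigmaD) (use fin in auto)
  then show ?thesis
    using s by (simp add: infsumI)
qed

lemma in_l2_weighted_product_summable:
  assumes f: "in_l2 V f" and g: "in_l2 V g"
    and W: "\<And>v. v \<in> V \<Longrightarrow> 0 \<le> W v" "\<And>v. v \<in> V \<Longrightarrow> W v \<le> M"
  shows "(\<lambda>v. W v * (norm (f v) * norm (g v))) summable_on V"
proof (rule summable_on_comparison_test)
  show "(\<lambda>v. M * ((norm (f v))\<^sup>2 + (norm (g v))\<^sup>2)) summable_on V"
    using f g unfolding in_l2_def by (intro summable_on_cmult_right summable_on_add) auto
next
  fix v assume v: "v \<in> V"
  have "2 * (norm (f v) * norm (g v)) \<le> (norm (f v))\<^sup>2 + (norm (g v))\<^sup>2"
    using sum_squares_bound[of "norm (f v)" "norm (g v)"] by (simp add: mult.assoc)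
  moreover have "0 \<le> norm (f v) * norm (g v)"
    by simp
  ultimately have "norm (f v) * norm (g v) \<le> (norm (f v))\<^sup>2 + (norm (g v))\<^sup>2"
    by linarith
  then show "W v * (norm (f v) * norm (g v)) \<le> M * ((norm (f v))\<^sup>2 + (norm (g v))\<^sup>2)"
    using W[OF v] by (intro mult_mono) auto
  show "0 \<le> W v * (norm (f v) * norm (g v))"
    using W(1)[OF v] by simp
qed

lemma weighted_inner_summable:
  assumes "(\<lambda>v. W v * (norm (f v) * norm (g v))) summable_on V" and "\<And>v. v \<in> V \<Longrightarrow> 0 \<le> W v"
  shows "(\<lambda>v. complex_of_real (W v) * (f v * cnj (g v))) summable_on V"
proof (rule abs_summable_summable)
  show "(\<lambda>v. norm (complex_of_real (W v) * (f v * cnj (g v)))) summable_on V"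
    using assms(1) by (rule summable_on_cong[THEN iffD1, rotated]) (simp add: norm_mult assms(2))
qed

section \<open>Rooted directed trees\<close>

lemma rooted_dtree_connected:
  "rooted_dtree V E r \<Longrightarrow> u \<in> V \<Longrightarrow> v \<in> V \<Longrightarrow> (u, v) \<in> (E \<union> E\<inverse>)\<^sup>*"
  unfolding rooted_dtree_def by (elim conjE) blast

lemma rooted_dtree_root_in: "rooted_dtree V E r \<Longrightarrow> r \<in> V"
  unfolding rooted_dtree_def by (elim conjE)

lemma rooted_dtree_edge_in:
  assumes "rooted_dtree V E r" and "(u, v) \<in> E"
  shows "u \<in> V" and "v \<in> V"
  using assms unfolding rooted_dtree_def by (elim conjE; blast)+

lemma rooted_dtree_unique_parent:
  assumes "rooted_dtree V E r" and "(u1, v) \<in> E" and "(u2, v) \<in> E"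
  shows "u1 = u2"
  using assms unfolding rooted_dtree_def by (elim conjE) blast

lemma rooted_dtree_root_no_parent:
  assumes "rooted_dtree V E r"
  shows "(u, r) \<notin> E"
proof -
  have "\<forall>v\<in>V. (\<nexists>u. (u, v) \<in> E) \<longleftrightarrow> v = r"
    using assms unfolding rooted_dtree_def by (elim conjE)
  then have "(\<nexists>u. (u, r) \<in> E) \<longleftrightarrow> r = r"
    using rooted_dtree_root_in[OF assms] by (rule bspec)
  then show ?thesis
    by simp
qed

lemma rooted_dtree_reachable_from_root:
  assumes T: "rooted_dtree V E r" and v: "v \<in> V"
  shows "\<exists>n. (r, v) \<in> E ^^ n"
proof -
  have "(r, v) \<in> (E \<union> E\<inverse>)\<^sup>*"
    using rooted_dtree_connected[OF T rooted_dtree_root_in[OF T] v] .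
  then show ?thesis
  proof (induction rule: rtrancl_induct)
    case base
    show ?case by (rule exI[of _ 0]) simp
  next
    case (step y z)
    then obtain n where n: "(r, y) \<in> E ^^ n" by blast
    from step.hyps(2) show ?case
    proof
      assume "(y, z) \<in> E"
      then have "(r, z) \<in> E ^^ Suc n" using n by auto
      then show ?thesis by blast
    next
      assume "(y, z) \<in> E\<inverse>"
      then have zy: "(z, y) \<in> E" by simp
      \<comment> \<open>z is the parent of y, so it is the penultimate vertex of the path from the root to y\<close>
      obtain m where "n = Suc m"
        using n zy rooted_dtree_root_no_parent[OF T] by (cases n) auto
      then obtain x where "(r, x) \<in> E ^^ m" "(x, y) \<in> E"
        using n by (meson relpow_Suc_E)
      moreover have "x = z"
        using rooted_dtree_unique_parent[OF T \<open>(x, y) \<in> E\<close> zy] .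
      ultimately show ?thesis by blast
    qed
  qed
qed

lemma rooted_dtree_path_length_unique:
  assumes T: "rooted_dtree V E r"
  shows "(r, v) \<in> E ^^ n \<Longrightarrow> (r, v) \<in> E ^^ m \<Longrightarrow> n = m"
proof (induction n arbitrary: m v)
  case 0
  then show ?case
    using rooted_dtree_root_no_parent[OF T] by (cases m) (auto elim: relpow_Suc_E)
next
  case (Suc n)
  obtain x where x: "(r, x) \<in> E ^^ n" "(x, v) \<in> E"
    using Suc.prems(1) by (meson relpow_Suc_E)
  show ?case
  proof (cases m)
    case 0
    then show ?thesis
      using Suc.prems(2) x(2) rooted_dtree_root_no_parent[OF T] by simp
  next
    case (Suc k)
    then obtain y where y: "(r, y) \<in> E ^^ k" "(y, v) \<in> E"
      using Suc.prems(2) by (meson relpow_Suc_E)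
    have "x = y"
      using rooted_dtree_unique_parent[OF T x(2) y(2)] .
    then show ?thesis
      using Suc.IH x(1) y(1) \<open>m = Suc k\<close> by blast
  qed
qed

lemma depth_eqI:
  assumes "rooted_dtree V E r" and "(r, v) \<in> E ^^ n"
  shows "depth E r v = n"
  unfolding depth_def
proof (rule the_equality)
  show "(r, v) \<in> E ^^ n"
    by (fact assms(2))
  show "m = n" if "(r, v) \<in> E ^^ m" for m
    using rooted_dtree_path_length_unique[OF assms(1) that assms(2)] .
qed

lemma depth_child:
  assumes T: "rooted_dtree V E r" and "(v, w) \<in> E"
  shows "depth E r w = depth E r v + 1"
proof -
  obtain n where n: "(r, v) \<in> E ^^ n"
    using rooted_dtree_reachable_from_root[OF T rooted_dtree_edge_in(1)[OF assms]] by blast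
  then have "(r, w) \<in> E ^^ Suc n"
    using assms(2) by auto
  then show ?thesis
    using depth_eqI[OF T] n by simp
qed

section \<open>Weighted shifts in which every vertex has at most one parent\<close>

definition shift_weight :: "(nat \<Rightarrow> 'v \<Rightarrow> 'v set) \<Rightarrow> (nat \<Rightarrow> 'v \<Rightarrow> real) \<Rightarrow> nat \<Rightarrow> 'v \<Rightarrow> real" where
  "shift_weight Chi lam i v = (\<Sum>w\<in>Chi i v. (lam i w)\<^sup>2)"

lemma shift_weight_nonneg: "0 \<le> shift_weight Chi lam i v"
  unfolding shift_weight_def by (simp add: sum_nonneg)

lemma shift_weight_le_sum:
  assumes "i < d"
  shows "shift_weight Chi lam i v \<le> (\<Sum>j<d. shift_weight Chi lam j v)"
  using assms by (intro member_le_sum) (auto simp: shift_weight_nonneg)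

lemma mshift_orphan:
  assumes "\<nexists>v. v \<in> V \<and> w \<in> Chi i v"
  shows "mshift V Chi lam i f w = 0"
proof -
  have "{v \<in> V. w \<in> Chi i v} = {}" using assms by blast
  then show ?thesis unfolding mshift_def by (simp only: sum.empty)
qed

lemma mshift_mshift_orphan:
  assumes "\<nexists>u x. u \<in> V \<and> x \<in> V \<and> w \<in> Chi i u \<and> u \<in> Chi j x"
  shows "mshift V Chi lam i (mshift V Chi lam j f) w = 0"
proof -
  have "mshift V Chi lam j f u = 0" if "u \<in> V" "w \<in> Chi i u" for u
    using assms that by (intro mshift_orphan) blast
  then show ?thesis
    unfolding mshift_def by (simp add: sum.neutral)
qed

locale single_parent_shift =
  fixes V :: "'v set" and Chi :: "nat \<Rightarrow> 'v \<Rightarrow> 'v set" and i :: nat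
  assumes children_subset: "Chi i v \<subseteq> V"
    and finite_children: "v \<in> V \<Longrightarrow> finite (Chi i v)"
    and parent_unique: "\<lbrakk>v \<in> V; v' \<in> V; w \<in> Chi i v; w \<in> Chi i v'\<rbrakk> \<Longrightarrow> v = v'"
begin

lemma mshift_child:
  assumes "v \<in> V" and "w \<in> Chi i v"
  shows "mshift V Chi lam i f w = complex_of_real (lam i w) * f v"
proof -
  have "{v' \<in> V. w \<in> Chi i v'} = {v}"
    using assms parent_unique by blast
  then show ?thesis unfolding mshift_def by simp
qed

lemma mshift_eq_0_outside: "w \<notin> V \<Longrightarrow> mshift V Chi lam i f w = 0"
  using children_subset by (intro mshift_orphan) blast

lemma sum_children_mshift_inner:
  assumes "v \<in> V"
  shows "(\<Sum>w\<in>Chi i v. mshift V Chi lam i f w * cnj (mshift V Chi lam i g w))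
           = complex_of_real (shift_weight Chi lam i v) * (f v * cnj (g v))"
proof -
  have "(\<Sum>w\<in>Chi i v. mshift V Chi lam i f w * cnj (mshift V Chi lam i g w))
      = (\<Sum>w\<in>Chi i v. complex_of_real ((lam i w)\<^sup>2) * (f v * cnj (g v)))"
    using mshift_child[OF assms] by (intro sum.cong) (auto simp: power2_eq_square)
  then show ?thesis
    by (simp only: shift_weight_def sum_distrib_right of_real_sum)
qed

lemma sum_children_norm_mshift_inner:
  assumes "v \<in> V"
  shows "(\<Sum>w\<in>Chi i v. norm (mshift V Chi lam i f w * cnj (mshift V Chi lam i g w)))
           = shift_weight Chi lam i v * (norm (f v) * norm (g v))"
proof -
  have "(\<Sum>w\<in>Chi i v. norm (mshift V Chi lam i f w * cnj (mshift V Chi lam i g w)))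
      = (\<Sum>w\<in>Chi i v. (lam i w)\<^sup>2 * (norm (f v) * norm (g v)))"
    using mshift_child[OF assms] by (intro sum.cong) (auto simp: norm_mult power2_eq_square)
  then show ?thesis
    by (simp only: shift_weight_def sum_distrib_right)
qed

lemma mshift_inner_has_sum:
  fixes lam :: "nat \<Rightarrow> 'v \<Rightarrow> real" and f g :: "'v \<Rightarrow> complex"
  defines "W \<equiv> shift_weight Chi lam i"
  assumes summable: "(\<lambda>v. W v * (norm (f v) * norm (g v))) summable_on V"
  shows "((\<lambda>w. mshift V Chi lam i f w * cnj (mshift V Chi lam i g w)) has_sum
           (\<Sum>\<^sub>\<infinity>v\<in>V. complex_of_real (W v) * (f v * cnj (g v)))) V"
proof -
  let ?h = "\<lambda>w. mshift V Chi lam i f w * cnj (mshift V Chi lam i g w)"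
  have disj: "disjoint_family_on (Chi i) V"
    unfolding disjoint_family_on_def using parent_unique by blast
  have "(\<lambda>v. \<Sum>w\<in>Chi i v. norm (?h w)) summable_on V"
    using summable unfolding W_def
    by (rule summable_on_cong[THEN iffD1, rotated]) (simp add: sum_children_norm_mshift_inner)
  then have "(?h has_sum (\<Sum>\<^sub>\<infinity>v\<in>V. \<Sum>w\<in>Chi i v. ?h w)) (\<Union>v\<in>V. Chi i v)"
    using finite_children disj by (intro has_sum_Union_finite_blocks)
  moreover have "(\<Sum>\<^sub>\<infinity>v\<in>V. \<Sum>w\<in>Chi i v. ?h w) = (\<Sum>\<^sub>\<infinity>v\<in>V. complex_of_real (W v) * (f v * cnj (g v)))"
    unfolding W_def by (rule infsum_cong) (rule sum_children_mshift_inner)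
  ultimately have "(?h has_sum (\<Sum>\<^sub>\<infinity>v\<in>V. complex_of_real (W v) * (f v * cnj (g v)))) (\<Union>v\<in>V. Chi i v)"
    by simp
  also have "?this \<longleftrightarrow> ?thesis"
  proof (rule has_sum_cong_neutral)
    fix w assume "w \<in> V - (\<Union>v\<in>V. Chi i v)"
    then have "\<nexists>v. v \<in> V \<and> w \<in> Chi i v"
      by blast
    then show "?h w = 0"
      by (simp add: mshift_orphan)
  next
    fix w assume "w \<in> (\<Union>v\<in>V. Chi i v) - V"
    with children_subset have False
      by blast
    then show "?h w = 0" ..
  qed (rule refl)
  finally show ?thesis .
qed

lemma mshift_norm_has_sum:
  fixes lam :: "nat \<Rightarrow> 'v \<Rightarrow> real" and f :: "'v \<Rightarrow> complex"
  defines "W \<equiv> shift_weight Chi lam i"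
  assumes summable: "(\<lambda>v. W v * (norm (f v))\<^sup>2) summable_on V"
  shows "((\<lambda>w. (norm (mshift V Chi lam i f w))\<^sup>2) has_sum (\<Sum>\<^sub>\<infinity>v\<in>V. W v * (norm (f v))\<^sup>2)) V"
proof -
  let ?X = "\<Sum>\<^sub>\<infinity>v\<in>V. W v * (norm (f v))\<^sup>2"
  have "((\<lambda>v. complex_of_real (W v * (norm (f v))\<^sup>2)) has_sum complex_of_real ?X) V"
    using summable by (intro has_sum_of_real) (simp add: summable_iff_has_sum_infsum)
  then have X: "(\<Sum>\<^sub>\<infinity>v\<in>V. complex_of_real (W v) * (f v * cnj (f v))) = complex_of_real ?X"
    by (simp add: infsumI flip: complex_norm_square)
  have "((\<lambda>w. mshift V Chi lam i f w * cnj (mshift V Chi lam i f w)) has_sum complex_of_real ?X) V"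
    using mshift_inner_has_sum[of lam f f] summable unfolding W_def X[unfolded W_def]
    by (simp add: power2_eq_square)
  then have "((\<lambda>w. complex_of_real ((norm (mshift V Chi lam i f w))\<^sup>2)) has_sum complex_of_real ?X) V"
    by (simp only: complex_norm_square)
  then show ?thesis
    by (simp only: has_sum_of_real_iff)
qed

lemma mshift_in_l2_norm:
  assumes "(\<lambda>v. shift_weight Chi lam i v * (norm (f v))\<^sup>2) summable_on V"
  shows "in_l2 V (mshift V Chi lam i f)"
    and "(l2norm V (mshift V Chi lam i f))\<^sup>2 = (\<Sum>\<^sub>\<infinity>v\<in>V. shift_weight Chi lam i v * (norm (f v))\<^sup>2)"
proof -
  note hs = mshift_norm_has_sum[OF assms]
  show "in_l2 V (mshift V Chi lam i f)"
    unfolding in_l2_def using hs mshift_eq_0_outside by (auto simp: summable_on_def)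
  have "0 \<le> (\<Sum>\<^sub>\<infinity>v\<in>V. shift_weight Chi lam i v * (norm (f v))\<^sup>2)"
    by (intro infsum_nonneg mult_nonneg_nonneg shift_weight_nonneg) simp
  then show "(l2norm V (mshift V Chi lam i f))\<^sup>2 = (\<Sum>\<^sub>\<infinity>v\<in>V. shift_weight Chi lam i v * (norm (f v))\<^sup>2)"
    unfolding l2norm_def using infsumI[OF hs] by simp
qed

lemma mshift_bounded_op:
  assumes bound: "\<And>v. v \<in> V \<Longrightarrow> shift_weight Chi lam i v \<le> M"
  shows "bounded_op V (mshift V Chi lam i)"
  unfolding bounded_op_def
proof (intro exI allI impI conjI)
  fix f assume f: "in_l2 V f"
  let ?W = "shift_weight Chi lam i"
  have f2: "(\<lambda>v. (norm (f v))\<^sup>2) summable_on V"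
    using f unfolding in_l2_def by blast
  have summable: "(\<lambda>v. ?W v * (norm (f v))\<^sup>2) summable_on V"
    using in_l2_weighted_product_summable[OF f f shift_weight_nonneg bound]
    by (simp add: power2_eq_square)
  show "in_l2 V (mshift V Chi lam i f)"
    using summable by (rule mshift_in_l2_norm)
  have "(l2norm V (mshift V Chi lam i f))\<^sup>2 = (\<Sum>\<^sub>\<infinity>v\<in>V. ?W v * (norm (f v))\<^sup>2)"
    using summable by (rule mshift_in_l2_norm)
  also have "\<dots> \<le> (\<Sum>\<^sub>\<infinity>v\<in>V. M * (norm (f v))\<^sup>2)"
    using summable summable_on_cmult_right[OF f2] bound by (intro infsum_mono mult_right_mono) auto
  also have "\<dots> = M * (\<Sum>\<^sub>\<infinity>v\<in>V. (norm (f v))\<^sup>2)"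
    by (rule infsum_cmult_right')
  finally have "l2norm V (mshift V Chi lam i f) \<le> sqrt (M * (\<Sum>\<^sub>\<infinity>v\<in>V. (norm (f v))\<^sup>2))"
    by (rule real_le_rsqrt)
  then show "l2norm V (mshift V Chi lam i f) \<le> sqrt M * l2norm V f"
    by (simp only: l2norm_def real_sqrt_mult)
qed

lemma l2norm_mshift_ebasis:
  assumes "v \<in> V"
  shows "(l2norm V (mshift V Chi lam i (ebasis v)))\<^sup>2 = shift_weight Chi lam i v"
proof -
  have hs: "((\<lambda>u. shift_weight Chi lam i u * (norm (ebasis v u))\<^sup>2) has_sum shift_weight Chi lam i v) V"
    using has_sum_single_support[OF assms, of "\<lambda>u. shift_weight Chi lam i u * (norm (ebasis v u))\<^sup>2"]
    by (simp add: ebasis_def)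
  then have "(\<lambda>u. shift_weight Chi lam i u * (norm (ebasis v u))\<^sup>2) summable_on V"
    by (auto simp: summable_on_def)
  then show ?thesis
    using infsumI[OF hs] by (simp add: mshift_in_l2_norm(2))
qed

lemma l2inner_mshift:
  assumes "(\<lambda>v. shift_weight Chi lam i v * (norm (f v) * norm (g v))) summable_on V"
  shows "l2inner V (mshift V Chi lam i f) (mshift V Chi lam i g)
           = (\<Sum>\<^sub>\<infinity>v\<in>V. complex_of_real (shift_weight Chi lam i v) * (f v * cnj (g v)))"
  unfolding l2inner_def using mshift_inner_has_sum[OF assms] by (rule infsumI)

end

lemma spherically_balanced_mshiftI:
  assumes shifts: "\<And>i. i < d \<Longrightarrow> single_parent_shift V Chi i"
    and commuting: "commuting d V (mshift V Chi lam)"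
    and total: "\<And>v. v \<in> V \<Longrightarrow> (\<Sum>i<d. shift_weight Chi lam i v) = K (gen v)"
  shows "spherically_balanced d V gen (mshift V Chi lam)"
  unfolding spherically_balanced_def
proof (intro conjI allI)
  fix t
  have "(\<Sum>j<d. (l2norm V (mshift V Chi lam j (ebasis v)))\<^sup>2) = K t" if "v \<in> V" "gen v = t" for v
    using single_parent_shift.l2norm_mshift_ebasis[OF shifts that(1)] total[OF that(1)] that(2)
    by simp
  then show "\<exists>K'. \<forall>v\<in>V. gen v = t \<longrightarrow> (\<Sum>j<d. (l2norm V (mshift V Chi lam j (ebasis v)))\<^sup>2) = K'"
    by blast
qed (fact commuting)

lemma joint_isometry_mshiftI:
  assumes shifts: "\<And>i. i < d \<Longrightarrow> single_parent_shift V Chi i"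
    and total: "\<And>v. v \<in> V \<Longrightarrow> (\<Sum>i<d. shift_weight Chi lam i v) = 1"
  shows "joint_isometry d V (mshift V Chi lam)"
  unfolding joint_isometry_def
proof (intro allI impI, elim conjE)
  fix f g assume f: "in_l2 V f" and g: "in_l2 V g"
  let ?a = "\<lambda>i v. complex_of_real (shift_weight Chi lam i v) * (f v * cnj (g v))"
  have summable: "(\<lambda>v. shift_weight Chi lam i v * (norm (f v) * norm (g v))) summable_on V"
    if "i < d" for i
    using f g shift_weight_nonneg
  proof (rule in_l2_weighted_product_summable)
    show "shift_weight Chi lam i v \<le> 1" if "v \<in> V" for v
      using shift_weight_le_sum[OF \<open>i < d\<close>] total[OF that] by metis
  qed
  have sum_has_sum: "((\<lambda>v. \<Sum>i<d. ?a i v) has_sum (\<Sum>i<d. \<Sum>\<^sub>\<infinity>v\<in>V. ?a i v)) V"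
    using weighted_inner_summable[OF summable shift_weight_nonneg]
    by (intro has_sum_sum) (auto simp: summable_iff_has_sum_infsum)
  have pointwise: "(\<Sum>i<d. ?a i v) = f v * cnj (g v)" if "v \<in> V" for v
  proof -
    have "(\<Sum>i<d. ?a i v) = complex_of_real (\<Sum>i<d. shift_weight Chi lam i v) * (f v * cnj (g v))"
      by (simp only: of_real_sum sum_distrib_right)
    then show ?thesis
      using total[OF that] by simp
  qed
  from sum_has_sum have "((\<lambda>v. f v * cnj (g v)) has_sum (\<Sum>i<d. \<Sum>\<^sub>\<infinity>v\<in>V. ?a i v)) V"
    by (rule has_sum_cong[THEN iffD1, rotated]) (rule pointwise)
  then show "(\<Sum>j<d. l2inner V (mshift V Chi lam j f) (mshift V Chi lam j g)) = l2inner V f g"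
    using single_parent_shift.l2inner_mshift[OF shifts summable]
    unfolding l2inner_def by (simp add: infsumI)
qed

section \<open>Directed Cartesian products of rooted trees\<close>

lemma chi_prod_subset: "chi_prod d Vs Es i v \<subseteq> prodV d Vs"
  unfolding chi_prod_def by blast

locale tree_product =
  fixes d :: nat and Vs :: "nat \<Rightarrow> 'a set" and Es :: "nat \<Rightarrow> ('a \<times> 'a) set" and rs :: "nat \<Rightarrow> 'a"
  assumes trees: "\<And>j. j < d \<Longrightarrow> rooted_dtree (Vs j) (Es j) (rs j)"
    and locally_finite: "\<And>j. j < d \<Longrightarrow> locally_finite_tree (Vs j) (Es j)"
    and leafless: "\<And>j. j < d \<Longrightarrow> leafless (Vs j) (Es j)"
begin

abbreviation "V \<equiv> prodV d Vs"
abbreviation "Ch \<equiv> chi_prod d Vs Es"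
abbreviation "gen \<equiv> abs_depth d Es rs"
abbreviation "dep j x \<equiv> depth (Es j) (rs j) x"

lemma prodV_coord: "v \<in> V \<Longrightarrow> k < d \<Longrightarrow> v k \<in> Vs k"
  unfolding prodV_def by auto

lemma prodV_update: "v \<in> V \<Longrightarrow> k < d \<Longrightarrow> a \<in> Vs k \<Longrightarrow> v(k := a) \<in> V"
  unfolding prodV_def by (auto simp: PiE_iff extensional_def)

lemma chi_prod_iff:
  "w \<in> Ch i v \<longleftrightarrow> w \<in> V \<and> (v i, w i) \<in> Es i \<and> (\<forall>k. k \<noteq> i \<longrightarrow> w k = v k)"
  unfolding chi_prod_def by blast

lemma chi_prod_parent_unique:
  assumes "i < d" and "w \<in> Ch i v" and "w \<in> Ch i v'"
  shows "v = v'"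
proof
  fix k
  show "v k = v' k"
  proof (cases "k = i")
    case True
    then show ?thesis
      using assms rooted_dtree_unique_parent[OF trees[OF \<open>i < d\<close>]] by (auto simp: chi_prod_iff)
  next
    case False
    then show ?thesis
      using assms by (auto simp: chi_prod_iff)
  qed
qed

lemma bij_betw_chi_prod_chi:
  assumes "i < d" and "v \<in> V"
  shows "bij_betw (\<lambda>w. w i) (Ch i v) (chi (Es i) (v i))"
proof (rule bij_betw_imageI)
  show "inj_on (\<lambda>w. w i) (Ch i v)"
    by (rule inj_onI) (metis chi_prod_iff ext)
  show "(\<lambda>w. w i) ` Ch i v = chi (Es i) (v i)"
  proof
    show "(\<lambda>w. w i) ` Ch i v \<subseteq> chi (Es i) (v i)"
      by (auto simp: chi_prod_iff chi_def)
    show "chi (Es i) (v i) \<subseteq> (\<lambda>w. w i) ` Ch i v"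
    proof
      fix a assume "a \<in> chi (Es i) (v i)"
      then have edge: "(v i, a) \<in> Es i"
        by (simp add: chi_def)
      then have "a \<in> Vs i"
        using rooted_dtree_edge_in(2)[OF trees[OF \<open>i < d\<close>]] by blast
      then have "v(i := a) \<in> Ch i v"
        using assms edge prodV_update by (simp add: chi_prod_iff)
      then show "a \<in> (\<lambda>w. w i) ` Ch i v"
        by (rule rev_image_eqI) simp
    qed
  qed
qed

lemma finite_chi_prod: "i < d \<Longrightarrow> v \<in> V \<Longrightarrow> finite (Ch i v)"
  using bij_betw_chi_prod_chi bij_betw_finite locally_finite prodV_coord
  unfolding locally_finite_tree_def by metis

lemma card_chi_prod: "i < d \<Longrightarrow> v \<in> V \<Longrightarrow> card (Ch i v) = card (chi (Es i) (v i))"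
  using bij_betw_chi_prod_chi bij_betw_same_card by blast

lemma card_chi_prod_pos: "i < d \<Longrightarrow> v \<in> V \<Longrightarrow> 0 < card (Ch i v)"
  using finite_chi_prod leafless prodV_coord bij_betw_chi_prod_chi
  unfolding leafless_def by (metis bij_betw_empty1 card_gt_0_iff)

lemma single_parent_shift_chi_prod: "i < d \<Longrightarrow> single_parent_shift V Ch i"
  by unfold_locales (auto intro: chi_prod_subset[THEN subsetD] finite_chi_prod chi_prod_parent_unique)

lemma parent_prod_eq: "i < d \<Longrightarrow> w \<in> Ch i v \<Longrightarrow> v \<in> V \<Longrightarrow> parent_prod d Vs Es i w = v"
  unfolding parent_prod_def using chi_prod_parent_unique by blast

lemma abs_depth_child:
  assumes "i < d" and "w \<in> Ch i v"
  shows "gen w = gen v + 1"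
proof -
  have edge: "(v i, w i) \<in> Es i" and same: "\<And>k. k \<noteq> i \<Longrightarrow> w k = v k"
    using assms(2) by (auto simp: chi_prod_iff)
  have "gen w = dep i (w i) + (\<Sum>k\<in>{..<d} - {i}. dep k (w k))"
    unfolding abs_depth_def using assms(1) by (simp add: sum.remove)
  also have "(\<Sum>k\<in>{..<d} - {i}. dep k (w k)) = (\<Sum>k\<in>{..<d} - {i}. dep k (v k))"
    using same by (intro sum.cong) auto
  also have "dep i (w i) = dep i (v i) + 1"
    using depth_child[OF trees[OF assms(1)] edge] .
  also have "dep i (v i) + 1 + (\<Sum>k\<in>{..<d} - {i}. dep k (v k)) = gen v + 1"
    unfolding abs_depth_def using assms(1) by (simp add: sum.remove)
  finally show ?thesis .
qed

lemma chi_prod_swap: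
  assumes "i \<noteq> j" "j < d" "x \<in> V" "w \<in> Ch i u" "u \<in> Ch j x"
  shows "w \<in> Ch j (w(j := x j))" and "w(j := x j) \<in> Ch i x"
proof -
  have "w \<in> V" "x j \<in> Vs j"
    using assms chi_prod_subset prodV_coord by blast+
  then have "w(j := x j) \<in> V"
    using assms(2) prodV_update by blast
  then show "w \<in> Ch j (w(j := x j))" and "w(j := x j) \<in> Ch i x"
    using assms(1,4,5) \<open>w \<in> V\<close> by (auto simp: chi_prod_iff)
qed

end

section \<open>The weights \<open>\<lambda>\<^sub>C\<close>\<close>

locale lamC_multishift = tree_product +
  fixes c :: "nat \<Rightarrow> real"
  assumes d_pos: "1 \<le> d" and c_pos: "\<And>t. 0 < c t"
begin

abbreviation "lam \<equiv> lamC d Vs Es rs c"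

lemma lamC_child:
  assumes "i < d" and "v \<in> V" and "w \<in> Ch i v"
  shows "lam i w = sqrt (c (gen v) / real (card (Ch i v)))
                   * sqrt ((real (dep i (v i)) + 1) / (real (gen v) + real d))"
  unfolding lamC_def Let_def parent_prod_eq[OF assms(1,3,2)] ..

lemma shift_weight_lamC:
  assumes "i < d" and "v \<in> V"
  shows "shift_weight Ch lam i v = c (gen v) * (real (dep i (v i)) + 1) / (real (gen v) + real d)"
proof -
  have "(lam i w)\<^sup>2 = c (gen v) / real (card (Ch i v)) * ((real (dep i (v i)) + 1) / (real (gen v) + real d))"
    if "w \<in> Ch i v" for w
    using lamC_child[OF assms that] c_pos[of "gen v"] by (simp add: power_mult_distrib)
  then have "shift_weight Ch lam i v
      = real (card (Ch i v)) * (c (gen v) / real (card (Ch i v)) * ((real (dep i (v i)) + 1) / (real (gen v) + real d)))"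
    unfolding shift_weight_def by simp
  then show ?thesis
    using card_chi_prod_pos[OF assms] by simp
qed

lemma sum_shift_weight_lamC:
  assumes "v \<in> V"
  shows "(\<Sum>i<d. shift_weight Ch lam i v) = c (gen v)"
proof -
  have "(\<Sum>i<d. shift_weight Ch lam i v) = c (gen v) * (\<Sum>i<d. real (dep i (v i)) + 1) / (real (gen v) + real d)"
    using shift_weight_lamC[OF _ assms] by (simp add: sum_distrib_left sum_divide_distrib)
  also have "(\<Sum>i<d. real (dep i (v i)) + 1) = real (gen v) + real d"
    unfolding abs_depth_def by (simp add: sum.distrib)
  finally show ?thesis
    using d_pos by simp
qed

lemma lamC_commute:
  assumes "i \<noteq> j" "i < d" "j < d" "x \<in> V" "w \<in> Ch i u" "u \<in> Ch j x" "w \<in> Ch j y" "y \<in> Ch i x"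
  shows "lam i w * lam j u = lam j w * lam i y"
proof -
  have V: "u \<in> V" "y \<in> V"
    using assms chi_prod_subset by blast+
  have "u i = x i" "y j = x j"
    using assms(1,6,8) by (auto simp: chi_prod_iff)
  then have "card (Ch i u) = card (Ch i x)" "card (Ch j y) = card (Ch j x)"
    using card_chi_prod assms(2-4) V by simp_all
  moreover have "gen u = gen x + 1" "gen y = gen x + 1"
    using abs_depth_child assms(2,3,6,8) by blast+
  ultimately show ?thesis
    unfolding lamC_child[OF assms(2) V(1) assms(5)] lamC_child[OF assms(3,4,6)]
      lamC_child[OF assms(3) V(2) assms(7)] lamC_child[OF assms(2,4,8)] \<open>u i = x i\<close> \<open>y j = x j\<close>
    by (simp add: real_sqrt_mult[symmetric] ac_simps)
qed

lemma mshift_lamC_commute: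
  assumes "i < d" and "j < d"
  shows "mshift V Ch lam i (mshift V Ch lam j f) w = mshift V Ch lam j (mshift V Ch lam i f) w"
proof (cases "i = j")
  case False
  interpret Si: single_parent_shift V Ch i
    using single_parent_shift_chi_prod[OF assms(1)] .
  interpret Sj: single_parent_shift V Ch j
    using single_parent_shift_chi_prod[OF assms(2)] .
  consider (path) u x where "u \<in> V" "x \<in> V" "w \<in> Ch i u" "u \<in> Ch j x"
    | (no_path) "\<nexists>u x. u \<in> V \<and> x \<in> V \<and> w \<in> Ch i u \<and> u \<in> Ch j x"
    by blast
  then show ?thesis
  proof cases
    case path
    define y where "y = w(j := x j)"
    have y: "w \<in> Ch j y" "y \<in> Ch i x"
      using chi_prod_swap[OF False assms(2) path(2-4)] unfolding y_def by blast+
    then have "y \<in> V"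
      using chi_prod_subset by blast
    have "mshift V Ch lam i (mshift V Ch lam j f) w = complex_of_real (lam i w * lam j u) * f x"
      using Si.mshift_child[OF path(1,3)] Sj.mshift_child[OF path(2,4)] by simp
    also have "\<dots> = complex_of_real (lam j w * lam i y) * f x"
      using lamC_commute[OF False assms path(2-4) y] by simp
    also have "\<dots> = mshift V Ch lam j (mshift V Ch lam i f) w"
      using Sj.mshift_child[OF \<open>y \<in> V\<close> y(1)] Si.mshift_child[OF path(2) y(2)] by simp
    finally show ?thesis .
  next
    case no_path
    have "\<nexists>y x. y \<in> V \<and> x \<in> V \<and> w \<in> Ch j y \<and> y \<in> Ch i x"
    proof clarify
      fix y x assume "y \<in> V" "x \<in> V" "w \<in> Ch j y" "y \<in> Ch i x"
      then have "w \<in> Ch i (w(i := x i))" "w(i := x i) \<in> Ch j x"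
        using chi_prod_swap[of j i x w y] False assms(1) by auto
      with no_path \<open>x \<in> V\<close> show False
        using chi_prod_subset by blast
    qed
    then show ?thesis
      using no_path by (simp add: mshift_mshift_orphan)
  qed
qed simp

lemma commuting_mshift_lamC: "commuting d V (mshift V Ch lam)"
  unfolding commuting_def using mshift_lamC_commute by blast

end

theorem mainTheorem20:
  fixes d :: nat
    and Vs :: "nat \<Rightarrow> 'a set"
    and Es :: "nat \<Rightarrow> ('a \<times> 'a) set"
    and rs :: "nat \<Rightarrow> 'a"
    and c :: "nat \<Rightarrow> real"
  assumes "d \<ge> 1"
    and "\<forall>j<d. rooted_dtree (Vs j) (Es j) (rs j) \<and> locally_finite_tree (Vs j) (Es j)
                \<and> leafless (Vs j) (Es j)"
    and "\<forall>t. c t > 0"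
    and "\<exists>M. \<forall>t. c t \<le> M"
  shows "(\<forall>i<d. bounded_op (prodV d Vs)
                  (mshift (prodV d Vs) (chi_prod d Vs Es) (lamC d Vs Es rs c) i))
         \<and> spherically_balanced d (prodV d Vs) (abs_depth d Es rs)
             (mshift (prodV d Vs) (chi_prod d Vs Es) (lamC d Vs Es rs c))
         \<and> ((\<forall>t. c t = 1) \<longrightarrow>
             joint_isometry d (prodV d Vs)
               (mshift (prodV d Vs) (chi_prod d Vs Es) (lamC d Vs Es rs c)))"
proof -
  interpret lamC_multishift d Vs Es rs c
    using assms(1-3) by unfold_locales blast+
  obtain M where M: "\<And>t. c t \<le> M"
    using assms(4) by blast
  have "bounded_op V (mshift V Ch lam i)" if "i < d" for i
  proof (rule single_parent_shift.mshift_bounded_op[OF single_parent_shift_chi_prod[OF that]])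
    show "shift_weight Ch lam i v \<le> M" if "v \<in> V" for v
      using shift_weight_le_sum[OF \<open>i < d\<close>, of Ch lam v] sum_shift_weight_lamC[OF that] M
      by (metis order_trans)
  qed
  moreover have "spherically_balanced d V gen (mshift V Ch lam)"
    using single_parent_shift_chi_prod commuting_mshift_lamC sum_shift_weight_lamC
    by (rule spherically_balanced_mshiftI)
  moreover have "joint_isometry d V (mshift V Ch lam)" if "\<forall>t. c t = 1"
    using single_parent_shift_chi_prod
  proof (rule joint_isometry_mshiftI)
    show "(\<Sum>i<d. shift_weight Ch lam i v) = 1" if "v \<in> V" for v
      using sum_shift_weight_lamC[OF that] \<open>\<forall>t. c t = 1\<close> by simp
  qed
  ultimately show ?thesis
    by blast
qed

end
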